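(* Let $\lambda\in 5\mathbb{Z}^+$, $r\in\mathbb{Z}^+$, $\mu>0$ and $\sigma>0$ with $\lambda\sigma\in 5\mathbb{N}$, and let $\Lambda$, $\gamma_k$, $\mathbb{W}_k$ be as in the context. For any complex numbers $\{a_k : k\in\Lambda\}$ with $a_{-k} = \overline{a_k}$, the function $$W(t,x) = \sum_{k\in\Lambda} a_k\,\mathbb{W}_k(t,x)$$ is real valued, and for each $\mathring{R}\in\mathring{\mathcal{M}}$, $$\sum_{k\in\Lambda}(\gamma_k(\mathring{R}))^2\,\frac{1}{|\mathbb{T}^2|}\int_{\mathbb{T}^2}\mathbb{W}_k\mathring{\otimes}\mathbb{W}_{-k}\,dx = -\mathring{R}.$$
   Context: $\mathbb{T}^2=\mathbb{R}^2/(2\pi\mathbb{Z}^2)$. $\Lambda^+ = \{\frac15(3e_1\pm4e_2),\frac15(4e_1\pm3e_2)\}$, $\Lambda^- = -\Lambda^+$, $\Lambda=\Lambda^+\cup\Lambda^-$. $\mathring{\mathcal{M}}$ is the space of real symmetric trace-free $2\times2$ matrices, and $f\mathring{\otimes}g = f\otimes g - \frac12 (f\cdot g)\,\mathrm{Id}$ (extended bilinearly to complex vectors). $\{\gamma_k\}_{k\in\Lambda}$ is a family of positive smooth functions on $\mathring{\mathcal{M}}$ with $\gamma_{-k}=\gamma_k$ and $\mathring{R}=\sum_{k\in\Lambda}\gamma_k(\mathring{R})^2\,(k\mathring{\otimes}k)$ for all $\mathring{R}\in\mathring{\mathcal{M}}$. For $k=(k_1,k_2)$, $k^\perp=(-k_2,k_1)$.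 Define $b_k(x) = i k^\perp e^{i\lambda k\cdot x}$. The 2D Dirichlet kernel is $D_r(x) = \frac{1}{2r+1}\sum_{k\in\Omega_r} e^{ik\cdot x}$ with $\Omega_r=\{(k_1,k_2)\in\mathbb{Z}^2 : -r\le k_i\le r\}$. Define $\eta_k(t,x) = D_r(\lambda\sigma(k\cdot x+\mu t),\ \lambda\sigma k^\perp\cdot x)$ for $k\in\Lambda^+$ and $\eta_k = \eta_{-k}$ for $k\in\Lambda^-$, and $\mathbb{W}_k(t,x) = \eta_k(t,x)\,b_k(x)$. *)

theory Defs
  imports "HOL-Analysis.Analysis"
begin

definition vec2 :: "real \<Rightarrow> real \<Rightarrow> real^2" where
  "vec2 a b = (\<chi> i. if i = 1 then a else b)"

definition perp :: "real^2 \<Rightarrow> real^2" where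
  "perp k = vec2 (- (k$2)) (k$1)"

definition LambdaP :: "(real^2) set" where
  "LambdaP = {vec2 (3/5) (4/5), vec2 (3/5) (-4/5), vec2 (4/5) (3/5), vec2 (4/5) (-3/5)}"

definition LambdaM :: "(real^2) set" where
  "LambdaM = uminus ` LambdaP"

definition Lambda :: "(real^2) set" where
  "Lambda = LambdaP \<union> LambdaM"

definition Mo :: "(real^2^2) set" where
  "Mo = {R. transpose R = R \<and> trace R = 0}"

definition rtens :: "real^2 \<Rightarrow> real^2 \<Rightarrow> real^2^2" where
  "rtens f g = (\<chi> i j. f$i * g$j) - ((1/2) * (f \<bullet> g)) *\<^sub>R mat 1"

text \<open>bilinear extension to complex vectors (no conjugation)\<close>
definition ctens :: "complex^2 \<Rightarrow> complex^2 \<Rightarrow> complex^2^2" where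
  "ctens f g = (\<chi> i j. f$i * g$j - (if i = j then (1/2) * (\<Sum>l\<in>UNIV. f$l * g$l) else 0))"

coinductive smooth2 :: "(real^2 \<Rightarrow> real) \<Rightarrow> bool" where
  "(\<forall>x. f differentiable (at x)) \<Longrightarrow>
   (\<forall>i. smooth2 (\<lambda>x. frechet_derivative f (at x) (axis i 1))) \<Longrightarrow> smooth2 f"

definition Mo_param :: "real^2 \<Rightarrow> real^2^2" where
  "Mo_param p = (\<chi> i j. if i = j then (if i = 1 then p$1 else - (p$1)) else p$2)"

definition smooth_on_Mo :: "(real^2^2 \<Rightarrow> real) \<Rightarrow> bool" where
  "smooth_on_Mo g \<longleftrightarrow> smooth2 (g \<circ> Mo_param)"

definition Omega :: "nat \<Rightarrow> (int \<times> int) set" where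
  "Omega r = {(k1, k2). - int r \<le> k1 \<and> k1 \<le> int r \<and> - int r \<le> k2 \<and> k2 \<le> int r}"

definition Dir :: "nat \<Rightarrow> real \<Rightarrow> real \<Rightarrow> complex" where
  "Dir r y1 y2 = (1 / (2 * of_nat r + 1)) *
     (\<Sum>(k1,k2)\<in>Omega r. cis (of_int k1 * y1 + of_int k2 * y2))"

definition eta :: "real \<Rightarrow> real \<Rightarrow> real \<Rightarrow> nat \<Rightarrow> real^2 \<Rightarrow> real \<Rightarrow> real^2 \<Rightarrow> complex" where
  "eta lam sig mu r k t x =
     (let k' = (if k \<in> LambdaP then k else - k) in
      Dir r (lam * sig * (k' \<bullet> x + mu * t)) (lam * sig * (perp k' \<bullet> x)))"

definition bvec :: "real \<Rightarrow> real^2 \<Rightarrow> real^2 \<Rightarrow> complex^2" where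
  "bvec lam k x = (\<chi> i. \<i> * complex_of_real (perp k $ i) * cis (lam * (k \<bullet> x)))"

definition WW :: "real \<Rightarrow> real \<Rightarrow> real \<Rightarrow> nat \<Rightarrow> real^2 \<Rightarrow> real \<Rightarrow> real^2 \<Rightarrow> complex^2" where
  "WW lam sig mu r k t x = eta lam sig mu r k t x *s bvec lam k x"

text \<open>The torus T^2 = R^2/(2 pi Z^2), represented by the fundamental domain [0,2pi]^2.\<close>
definition torus_box :: "(real^2) set" where
  "torus_box = cbox 0 (\<chi> i. 2 * pi)"

end

theory Submission
  imports Defs
begin

(* The terms of W for k and -k are complex conjugates: eta_k is real (the Dirichlet kernel sums
   over a symmetric set of frequencies) and even in k, while b_(-k) is the conjugate of b_k.
   Since |exp (i lam k.x)| = 1, ctens W_k W_(-k) = eta_k^2 rtens k^perp k^perp = - eta_k^2 rtens k k,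
   because k k^T + k^perp (k^perp)^T = |k|^2 Id in the plane. The vector lam sig k has integer
   coordinates and (n1, n2) |-> n1 k + n2 k^perp is injective (it is multiplication by a Gaussian
   integer), so the exponentials making up eta_k^2 are orthogonal characters of the torus; by
   Parseval eta_k^2 has mean 1, and the decomposition of R turns the sum into -R. *)

section \<open>Iterated integrals over boxes in the plane\<close>

lemma vec2_nth [simp]: "vec2 a b $ 1 = a" "vec2 a b $ 2 = b"
  by (simp_all add: vec2_def)

lemma vec2_components: "vec2 (z$1) (z$2) = z"
  by (simp add: vec2_def vec_eq_iff forall_2)

lemma continuous_on_vec2: "continuous_on S (\<lambda>p. vec2 (fst p) (snd p))"
  unfolding vec2_def
proof (rule continuous_on_vec_lambda)
  show "continuous_on S (\<lambda>p. if i = 1 then fst p else snd p)" for i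
    by (cases "i = 1") (simp_all add: continuous_on_fst continuous_on_snd continuous_on_id)
qed

lemma vec2_image_cbox:
  "(\<lambda>p. vec2 (fst p) (snd p)) ` cbox (a1, a2) (b1, b2) = cbox (vec2 a1 a2) (vec2 b1 b2)"
proof (intro set_eqI iffI)
  fix z assume "z \<in> cbox (vec2 a1 a2) (vec2 b1 b2)"
  then have "(z$1, z$2) \<in> cbox (a1, a2) (b1, b2)"
    by (simp add: mem_box_cart forall_2 cbox_Pair_eq)
  then show "z \<in> (\<lambda>p. vec2 (fst p) (snd p)) ` cbox (a1, a2) (b1, b2)"
    by (intro image_eqI[where x = "(z$1, z$2)"]) (simp_all add: vec2_components)
qed (clarsimp simp: mem_box_cart forall_2 cbox_Pair_eq)

lemma components_image_cbox:
  "(\<lambda>z::real^2. (z$1, z$2)) ` cbox a b = cbox (a$1, a$2) (b$1, b$2)"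
proof (intro set_eqI iffI)
  fix p :: "real \<times> real" assume "p \<in> cbox (a$1, a$2) (b$1, b$2)"
  then have "vec2 (fst p) (snd p) \<in> cbox a b"
    by (cases p) (simp add: mem_box_cart forall_2 cbox_Pair_eq)
  then show "p \<in> (\<lambda>z::real^2. (z$1, z$2)) ` cbox a b"
    by (intro image_eqI[where x = "vec2 (fst p) (snd p)"]) simp_all
qed (clarsimp simp: mem_box_cart forall_2 cbox_Pair_eq)

lemma content_cbox_vec2:
  "Henstock_Kurzweil_Integration.content (cbox (vec2 a1 a2) (vec2 b1 b2))
     = Henstock_Kurzweil_Integration.content (cbox (a1, a2) (b1, b2))"
proof -
  have "cbox (vec2 a1 a2) (vec2 b1 b2) = {} \<longleftrightarrow> \<not> (a1 \<le> b1 \<and> a2 \<le> b2)"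
    using interval_ne_empty_cart(1)[of "vec2 a1 a2" "vec2 b1 b2"] by (auto simp: forall_2)
  then show ?thesis
    by (simp add: content_Pair content_cbox_if_cart UNIV_2)
qed

lemma integral_cbox_cart2_iterated:
  fixes f :: "real^2 \<Rightarrow> 'a::banach"
  assumes f: "continuous_on (cbox a b) f"
  shows "integral (cbox a b) f
    = integral {a$1..b$1} (\<lambda>x. integral {a$2..b$2} (\<lambda>y. f (vec2 x y)))"
proof -
  let ?g = "\<lambda>p. vec2 (fst p) (snd p)" and ?h = "\<lambda>z::real^2. (z$1, z$2)"
  let ?B = "cbox (a$1, a$2) (b$1, b$2)"
  have "(f has_integral integral (cbox a b) f) (cbox a b)"
    using f by (simp add: integrable_continuous integrable_integral)
  then have "((\<lambda>p. f (?g p)) has_integral (1 / 1) *\<^sub>R integral (cbox a b) f) (?h ` cbox a b)"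
  proof (rule has_integral_twiddle[rotated 7])
    show "continuous (at p) ?g" for p
      using continuous_on_vec2 continuous_on_eq_continuous_at[OF open_UNIV] by blast
    show "\<exists>w z. ?g ` cbox u v = cbox w z" for u v
      using vec2_image_cbox by (cases u, cases v) blast
    show "Henstock_Kurzweil_Integration.content (?g ` cbox u v)
        = 1 * Henstock_Kurzweil_Integration.content (cbox u v)" for u v
      by (cases u, cases v) (simp only: vec2_image_cbox content_cbox_vec2 prod.sel mult_1)
    show "\<exists>w z. ?h ` cbox u v = cbox w z" for u v
      using components_image_cbox by blast
  qed (simp_all add: vec2_components)
  then have "integral (cbox a b) f = integral ?B (\<lambda>p. f (?g p))"
    by (simp add: components_image_cbox integral_unique)
  also have "\<dots> = integral {a$1..b$1} (\<lambda>x. integral {a$2..b$2} (\<lambda>y. f (vec2 x y)))"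
  proof -
    have "?g ` ?B \<subseteq> cbox a b"
      by (simp only: vec2_image_cbox vec2_components subset_refl)
    then have "continuous_on ?B (\<lambda>p. f (?g p))"
      by (intro continuous_on_compose2[OF f continuous_on_vec2])
    then show ?thesis
      by (simp add: integral_prod_continuous)
  qed
  finally show ?thesis .
qed

section \<open>Characters of the torus\<close>

lemma has_integral_cis_int_frequency:
  fixes m :: int
  shows "((\<lambda>y. cis (c + of_int m * y)) has_integral (if m = 0 then 2 * pi * cis c else 0)) {0..2*pi}"
proof (cases "m = 0")
  case True
  then show ?thesis
    using has_integral_const_real[of "cis c" 0 "2*pi"] by (simp add: scaleR_conv_of_real)
next
  case False
  define F where "F y = cis (c + of_int m * y) / (\<i> * of_int m)" for y
  have "(F has_vector_derivative cis (c + of_int m * y)) (at y within {0..2*pi})" for y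
    unfolding F_def has_vector_derivative_def
    by (auto intro!: derivative_eq_intros simp: False scaleR_conv_of_real field_simps)
  then have "((\<lambda>y. cis (c + of_int m * y)) has_integral F (2*pi) - F 0) {0..2*pi}"
    by (intro fundamental_theorem_of_calculus) auto
  moreover have "F (2*pi) = F 0"
    unfolding F_def by (simp add: distrib_left mult.commute[of _ "2*pi"] cis_mult[symmetric])
  ultimately show ?thesis
    using False by simp
qed

lemma integral_cis_int_frequency:
  fixes m :: int
  shows "integral {0..2*pi} (\<lambda>y. cis (c + of_int m * y)) = (if m = 0 then 2 * pi * cis c else 0)"
  using has_integral_cis_int_frequency by (rule integral_unique)

lemma has_integral_torus_cis:
  fixes m1 m2 :: int
  shows "((\<lambda>x. cis (c + of_int m1 * x$1 + of_int m2 * x$2))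
    has_integral (if m1 = 0 \<and> m2 = 0 then 4 * pi\<^sup>2 * cis c else 0)) torus_box"
proof -
  let ?f = "\<lambda>x::real^2. cis (c + of_int m1 * x$1 + of_int m2 * x$2)"
  have cont: "continuous_on torus_box ?f"
    by (intro continuous_intros)
  then have int: "?f integrable_on torus_box"
    unfolding torus_box_def by (rule integrable_continuous)
  have "integral torus_box ?f
      = integral {0..2*pi} (\<lambda>x. integral {0..2*pi} (\<lambda>y. cis ((c + of_int m1 * x) + of_int m2 * y)))"
    using integral_cbox_cart2_iterated[OF cont[unfolded torus_box_def]]
    by (simp add: torus_box_def add.assoc)
  also have "\<dots> = integral {0..2*pi} (\<lambda>x. (if m2 = 0 then 2 * pi else 0) * cis (c + of_int m1 * x))"
    by (simp only: integral_cis_int_frequency) (simp add: mult.commute)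
  also have "\<dots> = (if m2 = 0 then 2 * pi else 0) * integral {0..2*pi} (\<lambda>x. cis (c + of_int m1 * x))"
    by (rule integral_mult_right)
  also have "\<dots> = (if m1 = 0 \<and> m2 = 0 then 4 * pi\<^sup>2 * cis c else 0)"
    by (simp only: integral_cis_int_frequency) (simp add: power2_eq_square)
  finally show ?thesis
    using int by (simp only: has_integral_iff)
qed

lemma gaussian_mult_eq_0:
  fixes n1 n2 b1 b2 :: int
  assumes "b1 \<noteq> 0 \<or> b2 \<noteq> 0"
    and "n1 * b1 - n2 * b2 = 0" and "n1 * b2 + n2 * b1 = 0"
  shows "n1 = 0 \<and> n2 = 0"
proof -
  have "n1 * (b1\<^sup>2 + b2\<^sup>2) = b1 * (n1 * b1 - n2 * b2) + b2 * (n1 * b2 + n2 * b1)"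
    and "n2 * (b1\<^sup>2 + b2\<^sup>2) = b1 * (n1 * b2 + n2 * b1) - b2 * (n1 * b1 - n2 * b2)"
    by (simp_all add: power2_eq_square algebra_simps)
  then have "n1 * (b1\<^sup>2 + b2\<^sup>2) = 0" "n2 * (b1\<^sup>2 + b2\<^sup>2) = 0"
    using assms(2,3) by simp_all
  moreover have "b1\<^sup>2 + b2\<^sup>2 \<noteq> 0"
    using assms(1) by (simp add: sum_power2_eq_zero_iff)
  ultimately show ?thesis
    by (metis mult_eq_0_iff)
qed

lemma inner_cart2: "(u::real^2) \<bullet> x = u$1 * x$1 + u$2 * x$2"
  by (simp add: inner_vec_def sum_2)

lemma perp_nth [simp]: "perp k $ 1 = - k$2" "perp k $ 2 = k$1"
  by (simp_all add: perp_def)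

lemma has_integral_torus_cis_rotated:
  fixes n1 n2 :: int
  assumes int: "L * k$1 \<in> \<int>" "L * k$2 \<in> \<int>" and "L \<noteq> 0" "k \<noteq> 0"
  shows "((\<lambda>x. cis (of_int n1 * (L * (k \<bullet> x + s)) + of_int n2 * (L * (perp k \<bullet> x))))
    has_integral (if n1 = 0 \<and> n2 = 0 then 4 * pi\<^sup>2 :: complex else 0)) torus_box"
proof -
  obtain b1 b2 where b: "L * k$1 = of_int b1" "L * k$2 = of_int b2"
    using int by (auto elim!: Ints_cases)
  \<comment> \<open>\<open>m1 + i m2 = (n1 + i n2) (b1 + i b2)\<close>\<close>
  define m1 where "m1 = n1 * b1 - n2 * b2"
  define m2 where "m2 = n1 * b2 + n2 * b1"
  have phase: "of_int n1 * (L * (k \<bullet> x + s)) + of_int n2 * (L * (perp k \<bullet> x))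
      = of_int n1 * L * s + of_int m1 * x$1 + of_int m2 * x$2" for x
    by (simp add: inner_cart2 m1_def m2_def b[symmetric] algebra_simps)
  have "b1 \<noteq> 0 \<or> b2 \<noteq> 0"
  proof (rule ccontr)
    assume "\<not> (b1 \<noteq> 0 \<or> b2 \<noteq> 0)"
    then have "k$1 = 0" "k$2 = 0"
      using b \<open>L \<noteq> 0\<close> by simp_all
    then have "k = 0"
      by (simp add: vec_eq_iff forall_2)
    with \<open>k \<noteq> 0\<close> show False ..
  qed
  then have m_eq_0: "m1 = 0 \<and> m2 = 0 \<longleftrightarrow> n1 = 0 \<and> n2 = 0"
    using gaussian_mult_eq_0[of b1 b2 n1 n2] by (auto simp: m1_def m2_def)
  show ?thesis
    unfolding phase using has_integral_torus_cis[of "of_int n1 * L * s" m1 m2]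
    by (cases "n1 = 0 \<and> n2 = 0") (simp_all only: m_eq_0 if_True if_False, simp_all)
qed

section \<open>The Dirichlet kernel\<close>

lemma Omega_eq: "Omega r = {- int r..int r} \<times> {- int r..int r}"
  by (auto simp: Omega_def)

lemma finite_Omega [simp]: "finite (Omega r)"
  by (simp add: Omega_eq)

lemma card_Omega: "card (Omega r) = (2 * r + 1)\<^sup>2"
proof -
  have "nat (2 * int r + 1) = 2 * r + 1"
    by linarith
  then show ?thesis
    by (simp add: Omega_eq card_cartesian_product power2_eq_square)
qed

lemma uminus_in_Omega: "p \<in> Omega r \<Longrightarrow> (- fst p, - snd p) \<in> Omega r"
  by (auto simp: Omega_def)

lemma Dir_sq:
  "(Dir r y1 y2)\<^sup>2 = (1 / (2 * of_nat r + 1))\<^sup>2 *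
     (\<Sum>p\<in>Omega r. \<Sum>q\<in>Omega r. cis (of_int (fst p + fst q) * y1 + of_int (snd p + snd q) * y2))"
  unfolding Dir_def power2_eq_square
  by (simp add: sum_product split_def cis_mult algebra_simps)

lemma has_integral_Dir_sq:
  assumes orthonormal: "\<And>n1 n2::int. ((\<lambda>x. cis (of_int n1 * \<theta>1 x + of_int n2 * \<theta>2 x))
      has_integral (if n1 = 0 \<and> n2 = 0 then V else 0)) S"
  shows "((\<lambda>x. (Dir r (\<theta>1 x) (\<theta>2 x))\<^sup>2) has_integral V) S"
proof -
  have "((\<lambda>x. cis (of_int (fst p + fst q) * \<theta>1 x + of_int (snd p + snd q) * \<theta>2 x))
      has_integral (if q = (- fst p, - snd p) then V else 0)) S" for p q :: "int \<times> int"
    using orthonormal[of "fst p + fst q" "snd p + snd q"] by (cases p, cases q) auto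
  then have "((\<lambda>x. \<Sum>p\<in>Omega r. \<Sum>q\<in>Omega r.
        cis (of_int (fst p + fst q) * \<theta>1 x + of_int (snd p + snd q) * \<theta>2 x))
      has_integral (\<Sum>p\<in>Omega r. \<Sum>q\<in>Omega r. if q = (- fst p, - snd p) then V else 0)) S"
    by (intro has_integral_sum finite_Omega)
  also have "(\<Sum>p\<in>Omega r. \<Sum>q\<in>Omega r. if q = (- fst p, - snd p) then V else 0)
      = of_nat ((2 * r + 1)\<^sup>2) * V"
    by (simp add: uminus_in_Omega card_Omega)
  finally have "((\<lambda>x. (Dir r (\<theta>1 x) (\<theta>2 x))\<^sup>2)
      has_integral (1 / (2 * of_nat r + 1))\<^sup>2 * (of_nat ((2 * r + 1)\<^sup>2) * V)) S"
    unfolding Dir_sq by (rule has_integral_mult_right)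
  moreover have "(1 / (2 * of_nat r + 1))\<^sup>2 * (of_nat ((2 * r + 1)\<^sup>2) * V) = V"
  proof -
    have "(2 * of_nat r + 1 :: complex) = of_nat (Suc (2 * r))"
      by simp
    then show ?thesis
      by (simp only: of_nat_power power_one_over) (simp add: field_simps del: of_nat_Suc)
  qed
  ultimately show ?thesis
    by metis
qed

lemma cnj_Dir: "cnj (Dir r y1 y2) = Dir r y1 y2"
proof -
  have "cnj (\<Sum>(k1, k2)\<in>Omega r. cis (of_int k1 * y1 + of_int k2 * y2))
      = (\<Sum>p\<in>Omega r. cis (of_int (- fst p) * y1 + of_int (- snd p) * y2))"
    by (simp add: split_def cis_cnj)
  also have "\<dots> = (\<Sum>p\<in>Omega r. cis (of_int (fst p) * y1 + of_int (snd p) * y2))"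
    by (rule sum.reindex_bij_witness[of _ "\<lambda>p. (- fst p, - snd p)" "\<lambda>p. (- fst p, - snd p)"])
       (auto simp: uminus_in_Omega)
  finally show ?thesis
    by (simp add: Dir_def split_def)
qed

lemma LambdaP_first_pos: "k \<in> LambdaP \<Longrightarrow> k$1 > 0"
  by (auto simp: LambdaP_def)

lemma LambdaP_nonzero: "k \<in> LambdaP \<Longrightarrow> k \<noteq> 0"
  using LambdaP_first_pos by force

lemma uminus_LambdaP_notin: "k \<in> LambdaP \<Longrightarrow> - k \<notin> LambdaP"
  using LambdaP_first_pos[of k] LambdaP_first_pos[of "- k"] by auto

lemma LambdaP_five_times_Ints: "k \<in> LambdaP \<Longrightarrow> 5 * k$i \<in> \<int>"
  using exhaust_2[of i] by (auto simp: LambdaP_def)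

lemma uminus_in_Lambda: "k \<in> Lambda \<Longrightarrow> - k \<in> Lambda"
  by (auto simp: Lambda_def LambdaM_def)

lemma eta_uminus: "k \<in> Lambda \<Longrightarrow> eta lam sig mu r (- k) t x = eta lam sig mu r k t x"
  using uminus_LambdaP_notin[of k] uminus_LambdaP_notin[of "- k"]
  by (auto simp: eta_def Lambda_def LambdaM_def Let_def)

lemma cnj_eta: "cnj (eta lam sig mu r k t x) = eta lam sig mu r k t x"
  by (simp add: eta_def Let_def cnj_Dir)

lemma has_integral_eta_sq:
  assumes k: "k \<in> Lambda" and N: "lam * sig = 5 * real N" "N > 0"
  shows "((\<lambda>x. (eta lam sig mu r k t x)\<^sup>2) has_integral 4 * pi\<^sup>2) torus_box"
proof -
  define k' where "k' = (if k \<in> LambdaP then k else - k)"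
  have k': "k' \<in> LambdaP"
    using k by (auto simp: k'_def Lambda_def LambdaM_def)
  have Ints: "lam * sig * k'$i \<in> \<int>" for i
  proof -
    have "lam * sig * k'$i = of_nat N * (5 * k'$i)"
      using N(1) by simp
    then show ?thesis
      by (simp only:) (intro Ints_mult Ints_of_nat LambdaP_five_times_Ints[OF k'])
  qed
  have eta_eq: "eta lam sig mu r k t x
      = Dir r (lam * sig * (k' \<bullet> x + mu * t)) (lam * sig * (perp k' \<bullet> x))" for x
    by (simp add: eta_def Let_def k'_def)
  have "lam * sig \<noteq> 0"
    using N by simp
  then show ?thesis
    unfolding eta_eq
    using has_integral_torus_cis_rotated[OF Ints Ints _ LambdaP_nonzero[OF k']]
    by (intro has_integral_Dir_sq) simp
qed

lemma Im_sum_conj_symmetric_eq_0: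
  fixes f :: "'a::group_add \<Rightarrow> complex"
  assumes "\<And>k. k \<in> A \<Longrightarrow> - k \<in> A" and "\<And>k. k \<in> A \<Longrightarrow> f (- k) = cnj (f k)"
  shows "Im (sum f A) = 0"
proof -
  have "sum f A = (\<Sum>k\<in>A. f (- k))"
    by (rule sum.reindex_bij_witness[of _ uminus uminus]) (auto simp: assms(1))
  also have "\<dots> = cnj (sum f A)"
    by (simp add: assms(2))
  finally have "Im (sum f A) = - Im (sum f A)"
    by (metis cnj.sel(2))
  then show ?thesis
    by simp
qed

lemma WW_nth:
  "WW lam sig mu r k t x $ i = \<i> * eta lam sig mu r k t x * cis (lam * (k \<bullet> x)) * of_real (perp k $ i)"
  by (simp add: WW_def bvec_def)

lemma perp_uminus: "perp (- k) = - perp k"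
  by (simp add: perp_def vec2_def vec_eq_iff)

lemma WW_uminus_nth:
  "k \<in> Lambda \<Longrightarrow> WW lam sig mu r (- k) t x $ i = cnj (WW lam sig mu r k t x $ i)"
  by (simp add: WW_nth eta_uminus perp_uminus cnj_eta cis_cnj)

lemma rtens_perp_perp: "rtens (perp k) (perp k) = - rtens k k"
  by (simp add: rtens_def inner_cart2 vec_eq_iff forall_2 mat_def algebra_simps power2_eq_square)

lemma ctens_scaled_of_real:
  "ctens (\<chi> i. c * of_real (f $ i)) (\<chi> i. d * of_real (g $ i))
    = (\<chi> i j. c * d * of_real (rtens f g $ i $ j))"
  by (simp add: ctens_def rtens_def inner_cart2 vec_eq_iff forall_2 mat_def sum_2 algebra_simps)

definition of_real_mat :: "real^'n^'m \<Rightarrow> complex^'n^'m" where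
  "of_real_mat A = (\<chi> i j. of_real (A $ i $ j))"

lemma linear_of_real_mat: "linear of_real_mat"
  by (rule linearI) (simp_all add: of_real_mat_def vec_eq_iff, simp add: scaleR_conv_of_real)

lemma ctens_WW_uminus:
  assumes "k \<in> Lambda"
  shows "ctens (WW lam sig mu r k t x) (WW lam sig mu r (- k) t x)
    = (\<chi> i j. (eta lam sig mu r k t x)\<^sup>2 * of_real_mat (- rtens k k) $ i $ j)"
proof -
  define E where "E = eta lam sig mu r k t x"
  define e where "e = cis (lam * (k \<bullet> x))"
  define c where "c = \<i> * E * e"
  define d where "d = - \<i> * E * cnj e"
  have "WW lam sig mu r k t x = (\<chi> i. c * of_real (perp k $ i))"
    by (simp add: vec_eq_iff WW_nth c_def E_def e_def)
  moreover have "WW lam sig mu r (- k) t x = (\<chi> i. d * of_real (perp k $ i))"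
    unfolding vec_eq_iff WW_uminus_nth[OF assms] by (simp add: WW_nth d_def E_def e_def cnj_eta)
  moreover have "c * d = E\<^sup>2"
    by (simp add: c_def d_def e_def cis_cnj cis_mult power2_eq_square algebra_simps)
  ultimately show ?thesis
    by (simp add: ctens_scaled_of_real rtens_perp_perp E_def of_real_mat_def)
qed

lemma has_integral_times_matrix:
  fixes f :: "'a::euclidean_space \<Rightarrow> complex" and C :: "complex^'n^'m"
  assumes "(f has_integral y) S"
  shows "((\<lambda>x. \<chi> i j. f x * C $ i $ j) has_integral (\<chi> i j. y * C $ i $ j)) S"
proof -
  have "linear (\<lambda>z::complex. \<chi> i j. z * C $ i $ j)"
    by (rule linearI) (simp_all add: vec_eq_iff distrib_right)
  then show ?thesis
    using has_integral_linear[OF assms] by (simp add: linear_conv_bounded_linear o_def)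
qed

lemma average_ctens_WW_uminus:
  assumes "k \<in> Lambda" and "lam * sig = 5 * real N" "N > 0"
  shows "(1 / (4 * pi\<^sup>2)) *\<^sub>R integral torus_box
      (\<lambda>x. ctens (WW lam sig mu r k t x) (WW lam sig mu r (- k) t x))
    = - of_real_mat (rtens k k)"
proof -
  have "((\<lambda>x. ctens (WW lam sig mu r k t x) (WW lam sig mu r (- k) t x))
      has_integral (\<chi> i j. 4 * pi\<^sup>2 * of_real_mat (- rtens k k) $ i $ j)) torus_box"
    unfolding ctens_WW_uminus[OF assms(1)]
    by (rule has_integral_times_matrix[OF has_integral_eta_sq[OF assms]])
  then show ?thesis
    by (simp add: integral_unique vec_eq_iff real_vector.linear_neg[OF linear_of_real_mat],
        simp add: scaleR_conv_of_real)
qed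

lemma sum_average_ctens_WW_uminus:
  assumes "lam * sig = 5 * real N" "N > 0"
  shows "(\<Sum>k\<in>Lambda. c k *\<^sub>R ((1 / (4 * pi\<^sup>2)) *\<^sub>R integral torus_box
      (\<lambda>x. ctens (WW lam sig mu r k t x) (WW lam sig mu r (- k) t x))))
    = - of_real_mat (\<Sum>k\<in>Lambda. c k *\<^sub>R rtens k k)"
  by (simp add: average_ctens_WW_uminus[OF _ assms] sum_negf o_def
      real_vector.linear_sum[OF linear_of_real_mat] real_vector.linear_scale[OF linear_of_real_mat])

lemma Im_sum_scaled_WW_eq_0:
  assumes "\<And>k. k \<in> Lambda \<Longrightarrow> a (- k) = cnj (a k)"
  shows "Im ((\<Sum>k\<in>Lambda. a k *s WW lam sig mu r k t x) $ i) = 0"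
proof -
  have "(\<Sum>k\<in>Lambda. a k *s WW lam sig mu r k t x) $ i
      = (\<Sum>k\<in>Lambda. a k * WW lam sig mu r k t x $ i)"
    by (simp add: sum_component)
  then show ?thesis
    using Im_sum_conj_symmetric_eq_0[OF uminus_in_Lambda, of "\<lambda>k. a k * WW lam sig mu r k t x $ i"]
    by (simp add: assms WW_uminus_nth)
qed

theorem lemma4p2:
  fixes lam :: nat and r :: nat and mu sig :: real
    and gamma :: "real^2 \<Rightarrow> real^2^2 \<Rightarrow> real"
    and a :: "real^2 \<Rightarrow> complex"
  assumes lam: "lam > 0" "5 dvd lam"
    and r: "r > 0"
    and mu: "mu > 0" and sig: "sig > 0"
    and lamsig: "\<exists>n::nat. real lam * sig = 5 * real n"
    and gamma_pos: "\<forall>k\<in>Lambda. \<forall>R\<in>Mo. gamma k R > 0"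
    and gamma_smooth: "\<forall>k\<in>Lambda. smooth_on_Mo (gamma k)"
    and gamma_sym: "\<forall>k\<in>Lambda. \<forall>R\<in>Mo. gamma (- k) R = gamma k R"
    and gamma_dec: "\<forall>R\<in>Mo. R = (\<Sum>k\<in>Lambda. (gamma k R)\<^sup>2 *\<^sub>R rtens k k)"
    and a_conj: "\<forall>k\<in>Lambda. a (- k) = cnj (a k)"
  shows "(\<forall>t x i. Im ((\<Sum>k\<in>Lambda. a k *s WW (real lam) sig mu r k t x) $ i) = 0)
    \<and> (\<forall>R\<in>Mo. \<forall>t.
         (\<Sum>k\<in>Lambda. (gamma k R)\<^sup>2 *\<^sub>R
            ((1 / (4 * pi\<^sup>2)) *\<^sub>R integral torus_box
               (\<lambda>x. ctens (WW (real lam) sig mu r k t x) (WW (real lam) sig mu r (- k) t x))))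
         = - (\<chi> i j. complex_of_real (R $ i $ j)))"
proof -
  obtain N where N: "real lam * sig = 5 * real N"
    using lamsig by blast
  with lam sig have "N > 0"
    by (cases N) auto
  show ?thesis
    using Im_sum_scaled_WW_eq_0[of a, OF a_conj[rule_format]]
    by (simp only: sum_average_ctens_WW_uminus[OF N \<open>N > 0\<close>] of_real_mat_def)
      (simp add: gamma_dec[rule_format, symmetric])
qed

end
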